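(* Let $(G,P)$ be a quasi-lattice ordered group. The following are equivalent: (1) $(G,P)$ has a FESSPE; (2) $c_0(P)\subseteq B_P$; (3) $c_0(P)$ is an essential ideal in $B_P$; (4) $c_0(\iota(P))$ is an essential ideal in $\mathcal D$.
   Context: Quasi-lattice ordered group $(G,P)$: $G$ discrete, $P\subseteq G$ subsemigroup with $P\cap P^{-1}=\{e\}$, and for $x\le y\iff x^{-1}y\in P$ elements with a common upper bound in $P$ have a least one in $P$. A FESSPE is a finite $F\subseteq P\setminus\{e\}$ with $FP=P\setminus\{e\}$. For $s\in P$, $1_s\in\ell^\infty(P)$ is the characteristic function of $\{t\in P:s\le t\}$, and $B_P=\overline{\mathrm{span}}\{1_s:s\in P\}\subseteq\ell^\infty(P)$. On $\ell^2(P)$ with basis $\{\varepsilon_t\}$, $T_s\varepsilon_t=\varepsilon_{st}$ and $\mathcal D=\overline{\mathrm{span}}\{T_sT_s^*:s\in P\}$; note $T_sT_s^*$ is the multiplication operator $M_{1_s}$, so $\mathcal D=\{M_f:f\in B_P\}$. The spectrum of $\mathcal D$ is identified with Nica's space $\Omega$ of nonempty hereditary directed subsets of $P$, and $\iota:P\to\Omega$, $\iota(t)=\{s\in P:s\le t\}$; $c_0(\iota(P))$ denotes the set of multiplication operators $\{M_f:f\in c_0(P)\}$ on $\ell^2(P)$ (the functions on $\Omega$ supported on $\iota(P)$ vanishing at infinity there). *)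

theory Defs
  imports "HOL-Analysis.Analysis"
begin

text \<open>The discrete group G is a type of class group_add (not assumed commutative),
  written additively: the identity e is 0, the product is +, the inverse is unary minus.\<close>

definition pleq :: "'g::group_add set \<Rightarrow> 'g \<Rightarrow> 'g \<Rightarrow> bool" where
  "pleq P x y \<longleftrightarrow> - x + y \<in> P"

definition qlo :: "'g::group_add set \<Rightarrow> bool" where
  "qlo P \<longleftrightarrow>
     (\<forall>a\<in>P. \<forall>b\<in>P. a + b \<in> P) \<and>
     P \<inter> uminus ` P = {0} \<and>
     (\<forall>x y. (\<exists>z\<in>P. pleq P x z \<and> pleq P y z) \<longrightarrow>
        (\<exists>l\<in>P. pleq P x l \<and> pleq P y l \<and>
           (\<forall>z\<in>P. pleq P x z \<and> pleq P y z \<longrightarrow> pleq P l z)))"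

definition has_FESSPE :: "'g::group_add set \<Rightarrow> bool" where
  "has_FESSPE P \<longleftrightarrow> (\<exists>F. finite F \<and> F \<subseteq> P - {0} \<and>
      {f + p | f p. f \<in> F \<and> p \<in> P} = P - {0})"

text \<open>Elements of ell-infinity(P) are represented as functions on the whole group
  vanishing outside P, bounded on P.\<close>

definition linf :: "'g set \<Rightarrow> ('g \<Rightarrow> complex) set" where
  "linf P = {f. (\<forall>t. t \<notin> P \<longrightarrow> f t = 0) \<and> bounded (f ` P)}"

definition sup_dist :: "'g set \<Rightarrow> ('g \<Rightarrow> complex) \<Rightarrow> ('g \<Rightarrow> complex) \<Rightarrow> real" where
  "sup_dist P f g = (SUP t\<in>P. norm (f t - g t))"

definition ind :: "'g::group_add set \<Rightarrow> 'g \<Rightarrow> 'g \<Rightarrow> complex" where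
  "ind P s = (\<lambda>t. if t \<in> P \<and> pleq P s t then 1 else 0)"

definition span_ind :: "'g::group_add set \<Rightarrow> ('g \<Rightarrow> complex) set" where
  "span_ind P = {g. \<exists>S c. finite S \<and> S \<subseteq> P \<and> g = (\<lambda>t. \<Sum>s\<in>S. c s * ind P s t)}"

definition BP :: "'g::group_add set \<Rightarrow> ('g \<Rightarrow> complex) set" where
  "BP P = {f \<in> linf P. \<forall>e>0. \<exists>g\<in>span_ind P. sup_dist P f g < e}"

definition c0 :: "'g set \<Rightarrow> ('g \<Rightarrow> complex) set" where
  "c0 P = {f. (\<forall>t. t \<notin> P \<longrightarrow> f t = 0) \<and> (\<forall>e>0. finite {t\<in>P. e \<le> norm (f t)})}"

text \<open>Parameters: addition, multiplication, scalar multiplication, zero and metric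
  (induced by the norm) of the ambient algebra; A is the algebra, I the candidate ideal.\<close>

definition is_closed_ideal ::
  "('a \<Rightarrow> 'a \<Rightarrow> 'a) \<Rightarrow> ('a \<Rightarrow> 'a \<Rightarrow> 'a) \<Rightarrow> (complex \<Rightarrow> 'a \<Rightarrow> 'a) \<Rightarrow> 'a \<Rightarrow>
   ('a \<Rightarrow> 'a \<Rightarrow> real) \<Rightarrow> 'a set \<Rightarrow> 'a set \<Rightarrow> bool" where
  "is_closed_ideal pl mu sc z d A I \<longleftrightarrow>
     I \<subseteq> A \<and> z \<in> I \<and>
     (\<forall>x\<in>I. \<forall>y\<in>I. pl x y \<in> I) \<and>
     (\<forall>c. \<forall>x\<in>I. sc c x \<in> I) \<and>
     (\<forall>a\<in>A. \<forall>x\<in>I. mu a x \<in> I \<and> mu x a \<in> I) \<and>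
     (\<forall>a\<in>A. (\<forall>e>0. \<exists>x\<in>I. d a x < e) \<longrightarrow> a \<in> I)"

definition is_essential_ideal ::
  "('a \<Rightarrow> 'a \<Rightarrow> 'a) \<Rightarrow> ('a \<Rightarrow> 'a \<Rightarrow> 'a) \<Rightarrow> (complex \<Rightarrow> 'a \<Rightarrow> 'a) \<Rightarrow> 'a \<Rightarrow>
   ('a \<Rightarrow> 'a \<Rightarrow> real) \<Rightarrow> 'a set \<Rightarrow> 'a set \<Rightarrow> bool" where
  "is_essential_ideal pl mu sc z d A I \<longleftrightarrow>
     is_closed_ideal pl mu sc z d A I \<and>
     (\<forall>J. is_closed_ideal pl mu sc z d A J \<and> J \<noteq> {z} \<longrightarrow> I \<inter> J \<noteq> {z})"

definition fun_essential_ideal :: "'g set \<Rightarrow> ('g \<Rightarrow> complex) set \<Rightarrow> ('g \<Rightarrow> complex) set \<Rightarrow> bool" where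
  "fun_essential_ideal P A I =
     is_essential_ideal (\<lambda>f g t. f t + g t) (\<lambda>f g t. f t * g t) (\<lambda>c f t. c * f t)
       (\<lambda>t. 0) (sup_dist P) A I"

definition l2 :: "'g set \<Rightarrow> ('g \<Rightarrow> complex) set" where
  "l2 P = {x. (\<forall>t. t \<notin> P \<longrightarrow> x t = 0) \<and> (\<lambda>t. (norm (x t))\<^sup>2) summable_on P}"

definition l2norm :: "'g set \<Rightarrow> ('g \<Rightarrow> complex) \<Rightarrow> real" where
  "l2norm P x = sqrt (infsum (\<lambda>t. (norm (x t))\<^sup>2) P)"

type_synonym 'g op = "('g \<Rightarrow> complex) \<Rightarrow> ('g \<Rightarrow> complex)"

definition op_dist :: "'g set \<Rightarrow> 'g op \<Rightarrow> 'g op \<Rightarrow> real" where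
  "op_dist P S T = Sup {l2norm P (\<lambda>t. S x t - T x t) | x. x \<in> l2 P \<and> l2norm P x \<le> 1}"

definition mult_op :: "('g \<Rightarrow> complex) \<Rightarrow> 'g op" where
  "mult_op f = (\<lambda>x t. f t * x t)"

text \<open>The diagonal algebra D = {M_f : f in B_P} (= closed span of the T_s T_s^*).\<close>
definition Diag :: "'g::group_add set \<Rightarrow> 'g op set" where
  "Diag P = mult_op ` BP P"

definition c0_iota :: "'g set \<Rightarrow> 'g op set" where
  "c0_iota P = mult_op ` c0 P"

definition op_essential_ideal :: "'g set \<Rightarrow> 'g op set \<Rightarrow> 'g op set \<Rightarrow> bool" where
  "op_essential_ideal P A I =
     is_essential_ideal (\<lambda>S T x t. S x t + T x t) (\<lambda>S T. S \<circ> T) (\<lambda>c S x t. c * S x t)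
       (\<lambda>x t. 0) (op_dist P) A I"

end

theory Submission
  imports Defs
begin

text \<open>Under a FESSPE F, the point mass at s is the finite product
  1_s \<Prod>_{f\<in>F} (1 - 1_{sf}); since 1_a 1_b is 1_{a\<or>b} or 0 in a quasi-lattice order,
  such products stay in the span of the 1_s, hence so do all finitely supported functions,
  and uniform approximation gives c_0(P) \<subseteq> B_P. Conversely, approximate the point mass at e
  within 1/2 by \<Sum>_{s\<in>S} c_s 1_s: if some t \<noteq> e lay above no s \<in> S - {e}, the sum would take
  the same value at t and at e, which is impossible; so S - {e} is a FESSPE.
  Once c_0(P) \<subseteq> B_P, it is an essential ideal because a nonzero f \<in> B_P with f(t) \<noteq> 0
  gives the nonzero element \<delta>_t f of c_0(P) in every ideal containing f; on l^2(P) the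
  same holds for multiplication operators, since the operator norm of M_f dominates |f(t)|.\<close>

lemma qlo_zero: "qlo P \<Longrightarrow> 0 \<in> P"
  unfolding qlo_def by blast

lemma qlo_add: "qlo P \<Longrightarrow> a \<in> P \<Longrightarrow> b \<in> P \<Longrightarrow> a + b \<in> P"
  unfolding qlo_def by blast

lemma qlo_antisym:
  assumes "qlo P" "a \<in> P" "- a \<in> P"
  shows "a = 0"
proof -
  have "a \<in> P \<inter> uminus ` P" using assms(2,3) by (metis IntI image_eqI minus_minus)
  then show ?thesis using assms(1) unfolding qlo_def by blast
qed

lemma qlo_lub:
  "qlo P \<Longrightarrow> z \<in> P \<Longrightarrow> pleq P a z \<Longrightarrow> pleq P b z \<Longrightarrow>
    \<exists>l\<in>P. pleq P a l \<and> pleq P b l \<and> (\<forall>z\<in>P. pleq P a z \<and> pleq P b z \<longrightarrow> pleq P l z)"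
  unfolding qlo_def by blast

lemma pleq_trans:
  assumes "qlo P" "pleq P x y" "pleq P y z"
  shows "pleq P x z"
proof -
  have "(- x + y) + (- y + z) \<in> P" using assms qlo_add unfolding pleq_def by blast
  then show ?thesis unfolding pleq_def by (simp add: add.assoc)
qed

lemma pleq_zero_imp_zero: "qlo P \<Longrightarrow> s \<in> P \<Longrightarrow> pleq P s 0 \<Longrightarrow> s = 0"
  unfolding pleq_def by (simp add: qlo_antisym)

lemma pleq_add_right_iff: "pleq P s (s + u) \<longleftrightarrow> u \<in> P"
  by (simp add: pleq_def add.assoc[symmetric])

subsection \<open>The span of the indicators 1_s\<close>

lemma span_indI:
  "finite S \<Longrightarrow> S \<subseteq> P \<Longrightarrow> (\<lambda>t. \<Sum>s\<in>S. c s * ind P s t) \<in> span_ind P"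
  unfolding span_ind_def by blast

lemma span_ind_zero: "(\<lambda>t. 0) \<in> span_ind P"
  using span_indI[of "{}"] by simp

lemma ind_in_span_ind: "s \<in> P \<Longrightarrow> ind P s \<in> span_ind P"
  using span_indI[of "{s}" P "\<lambda>_. 1"] by simp

lemma span_ind_scale: "f \<in> span_ind P \<Longrightarrow> (\<lambda>t. a * f t) \<in> span_ind P"
  unfolding span_ind_def
  by (auto simp: sum_distrib_left mult.assoc intro!: exI[of _ "\<lambda>s. a * _ s"])

lemma span_ind_add:
  assumes "f \<in> span_ind P" "g \<in> span_ind P"
  shows "(\<lambda>t. f t + g t) \<in> span_ind P"
proof -
  obtain S1 c1 S2 c2 where S: "finite S1" "S1 \<subseteq> P" "finite S2" "S2 \<subseteq> P"
    and f: "f = (\<lambda>t. \<Sum>s\<in>S1. c1 s * ind P s t)" and g: "g = (\<lambda>t. \<Sum>s\<in>S2. c2 s * ind P s t)"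
    using assms unfolding span_ind_def by blast
  have extend: "(\<Sum>s\<in>A. k s * ind P s t) = (\<Sum>s\<in>S1 \<union> S2. (if s \<in> A then k s else 0) * ind P s t)"
    if "A \<subseteq> S1 \<union> S2" for A k t
    using S that by (intro sum.mono_neutral_cong_left) auto
  have "f t + g t = (\<Sum>s\<in>S1 \<union> S2. ((if s \<in> S1 then c1 s else 0) + (if s \<in> S2 then c2 s else 0))
      * ind P s t)" for t
    using extend[of S1 c1 t] extend[of S2 c2 t] by (simp add: f g distrib_right sum.distrib)
  then show ?thesis
    using span_indI[of "S1 \<union> S2" P] S by simp
qed

lemma span_ind_diff:
  "f \<in> span_ind P \<Longrightarrow> g \<in> span_ind P \<Longrightarrow> (\<lambda>t. f t - g t) \<in> span_ind P"
  using span_ind_add[OF _ span_ind_scale[of g P "-1"], of f] by simp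

lemma span_ind_sum:
  "finite A \<Longrightarrow> (\<And>a. a \<in> A \<Longrightarrow> h a \<in> span_ind P) \<Longrightarrow> (\<lambda>t. \<Sum>a\<in>A. h a t) \<in> span_ind P"
proof (induction A rule: finite_induct)
  case empty
  then show ?case using span_ind_zero by simp
next
  case (insert x F)
  then show ?case using span_ind_add[of "h x" P "\<lambda>t. \<Sum>a\<in>F. h a t"] by simp
qed

lemma ind_mult_ind_in_span_ind:
  assumes q: "qlo P"
  shows "(\<lambda>t. ind P a t * ind P b t) \<in> span_ind P"
proof (cases "\<exists>z\<in>P. pleq P a z \<and> pleq P b z")
  case True
  then obtain l where l: "l \<in> P" "pleq P a l" "pleq P b l"
    "\<forall>z\<in>P. pleq P a z \<and> pleq P b z \<longrightarrow> pleq P l z"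
    using qlo_lub[OF q] by blast
  have "pleq P a t \<and> pleq P b t \<longleftrightarrow> pleq P l t" if "t \<in> P" for t
    using l that pleq_trans[OF q] by blast
  then have "(\<lambda>t. ind P a t * ind P b t) = ind P l"
    by (auto simp: ind_def fun_eq_iff)
  then show ?thesis using ind_in_span_ind[OF l(1)] by simp
next
  case False
  then have "(\<lambda>t. ind P a t * ind P b t) = (\<lambda>t. 0)"
    by (auto simp: ind_def fun_eq_iff)
  then show ?thesis using span_ind_zero by simp
qed

lemma span_ind_mult_ind:
  assumes q: "qlo P" and f: "f \<in> span_ind P"
  shows "(\<lambda>t. f t * ind P b t) \<in> span_ind P"
proof -
  obtain S c where S: "finite S" "S \<subseteq> P" and f: "f = (\<lambda>t. \<Sum>s\<in>S. c s * ind P s t)"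
    using f unfolding span_ind_def by blast
  have "(\<lambda>t. f t * ind P b t) = (\<lambda>t. \<Sum>s\<in>S. c s * (ind P s t * ind P b t))"
    by (simp add: f sum_distrib_right mult.assoc)
  also have "\<dots> \<in> span_ind P"
    using S ind_mult_ind_in_span_ind[OF q] by (intro span_ind_sum span_ind_scale) auto
  finally show ?thesis .
qed

subsection \<open>Finitely supported functions under a FESSPE\<close>

lemma ind_prod_in_span_ind:
  assumes q: "qlo P" and s: "s \<in> P" and F: "finite F"
  shows "(\<lambda>t. ind P s t * (\<Prod>f\<in>F. 1 - ind P (s + f) t)) \<in> span_ind P"
  using F
proof (induction F rule: finite_induct)
  case empty
  then show ?case using ind_in_span_ind[OF s] by simp
next
  case (insert f F)
  define g where "g = (\<lambda>t. ind P s t * (\<Prod>f\<in>F. 1 - ind P (s + f) t))"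
  have "g \<in> span_ind P" using insert g_def by simp
  then have "(\<lambda>t. g t - g t * ind P (s + f) t) \<in> span_ind P"
    by (intro span_ind_diff span_ind_mult_ind[OF q])
  moreover have "(\<lambda>t. ind P s t * (\<Prod>f\<in>insert f F. 1 - ind P (s + f) t))
      = (\<lambda>t. g t - g t * ind P (s + f) t)"
    using insert by (simp add: g_def fun_eq_iff algebra_simps)
  ultimately show ?case by simp
qed

lemma indicator_singleton_eq_ind_prod:
  assumes q: "qlo P" and F: "finite F" "F \<subseteq> P - {0}"
    and cover: "{f + p | f p. f \<in> F \<and> p \<in> P} = P - {0}" and s: "s \<in> P"
  shows "indicator {s} = (\<lambda>t. ind P s t * (\<Prod>f\<in>F. 1 - ind P (s + f) t))"
proof
  fix t
  show "indicator {s} t = ind P s t * (\<Prod>f\<in>F. 1 - ind P (s + f) t)"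
  proof (cases "t \<in> P \<and> pleq P s t")
    case False
    then have "t \<noteq> s" using s qlo_zero[OF q] by (auto simp: pleq_def)
    moreover have "ind P s t = 0" using False by (simp add: ind_def)
    ultimately show ?thesis by simp
  next
    case True
    define u where "u = - s + t"
    have u: "u \<in> P" and t: "t = s + u" using True by (simp_all add: u_def pleq_def add.assoc[symmetric])
    show ?thesis
    proof (cases "u = 0")
      case True
      have "\<not> pleq P (s + f) s" if "f \<in> F" for f
        using that F qlo_antisym[OF q, of f]
        by (auto simp: pleq_def minus_add add.assoc)
      then show ?thesis using True t s qlo_zero[OF q] by (simp add: ind_def pleq_def)
    next
      case False
      then obtain f p where fp: "u = f + p" "f \<in> F" "p \<in> P" using u cover by blast
      then have "t = (s + f) + p" using t by (simp add: add.assoc)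
      then have "ind P (s + f) t = 1"
        using fp(3) qlo_add[OF q s u] t by (simp add: ind_def pleq_add_right_iff)
      then have "(\<Prod>f\<in>F. 1 - ind P (s + f) t) = 0"
        using fp F by (intro prod_zero) auto
      moreover have "t \<noteq> s" using False t by (metis add.right_neutral add_left_cancel)
      ultimately show ?thesis by simp
    qed
  qed
qed

lemma finite_support_in_span_ind:
  assumes q: "qlo P" and fe: "has_FESSPE P" and A: "finite A" "A \<subseteq> P"
    and g: "\<And>t. t \<notin> A \<Longrightarrow> g t = 0"
  shows "g \<in> span_ind P"
proof -
  obtain F where F: "finite F" "F \<subseteq> P - {0}" and cover: "{f + p | f p. f \<in> F \<and> p \<in> P} = P - {0}"
    using fe unfolding has_FESSPE_def by blast
  have point_mass: "indicator {s} \<in> span_ind P" if "s \<in> P" for s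
    using indicator_singleton_eq_ind_prod[OF q F cover that] ind_prod_in_span_ind[OF q that F(1)]
    by simp
  have "g t = (\<Sum>s\<in>A. g s * indicator {s} t)" for t
    using A g by (cases "t \<in> A") (auto simp: indicator_def if_distrib cong: if_cong)
  then have "g = (\<lambda>t. \<Sum>s\<in>A. g s * indicator {s} t)" by blast
  also have "\<dots> \<in> span_ind P"
    using A point_mass by (intro span_ind_sum span_ind_scale) auto
  finally show ?thesis .
qed

lemma linf_bound:
  assumes "f \<in> linf P"
  shows "\<exists>B. \<forall>t. norm (f t) \<le> B"
proof -
  obtain B where B: "\<forall>t\<in>P. norm (f t) \<le> B"
    using assms unfolding linf_def bounded_iff by blast
  have "norm (f t) \<le> max B 0" for t
    using B assms unfolding linf_def by (cases "t \<in> P") (auto simp: le_max_iff_disj)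
  then show ?thesis by blast
qed

lemma c0_finite_level: "f \<in> c0 P \<Longrightarrow> e > 0 \<Longrightarrow> finite {t\<in>P. e \<le> norm (f t)}"
  unfolding c0_def by blast

lemma c0_subset_linf: "c0 P \<subseteq> linf P"
proof
  fix f assume f: "f \<in> c0 P"
  have "f ` P \<subseteq> f ` {t\<in>P. 1 \<le> norm (f t)} \<union> cball 0 1"
    by auto
  moreover have "bounded (f ` {t\<in>P. 1 \<le> norm (f t)} \<union> cball 0 1)"
    using c0_finite_level[OF f, of 1] by (simp add: finite_imp_bounded)
  ultimately show "f \<in> linf P"
    using f bounded_subset unfolding c0_def linf_def by blast
qed

lemma span_ind_subset_linf: "span_ind P \<subseteq> linf P"
proof
  fix g assume "g \<in> span_ind P"
  then obtain S c where "finite S" and g: "g = (\<lambda>t. \<Sum>s\<in>S. c s * ind P s t)"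
    unfolding span_ind_def by blast
  have "norm (g t) \<le> (\<Sum>s\<in>S. norm (c s))" for t
  proof -
    have "norm (g t) \<le> (\<Sum>s\<in>S. norm (c s * ind P s t))"
      unfolding g by (rule norm_sum)
    also have "\<dots> \<le> (\<Sum>s\<in>S. norm (c s))"
      by (intro sum_mono) (simp add: ind_def norm_mult)
    finally show ?thesis .
  qed
  moreover have "g t = 0" if "t \<notin> P" for t
    using that by (simp add: g ind_def)
  ultimately show "g \<in> linf P"
    unfolding linf_def bounded_iff by blast
qed

lemma norm_le_sup_dist:
  assumes "f \<in> linf P" "g \<in> linf P" "t \<in> P"
  shows "norm (f t - g t) \<le> sup_dist P f g"
proof -
  obtain Bf Bg where "\<forall>t. norm (f t) \<le> Bf" "\<forall>t. norm (g t) \<le> Bg"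
    using linf_bound assms(1,2) by metis
  then have "norm (f t - g t) \<le> Bf + Bg" for t
    by (meson add_mono norm_triangle_ineq4 order.trans)
  then show ?thesis
    unfolding sup_dist_def by (intro cSUP_upper[OF assms(3)] bdd_aboveI2)
qed

lemma c0_zero: "(\<lambda>t. 0) \<in> c0 P"
  unfolding c0_def by auto

lemma c0_add:
  assumes f: "f \<in> c0 P" and g: "g \<in> c0 P"
  shows "(\<lambda>t. f t + g t) \<in> c0 P"
proof -
  have "finite {t\<in>P. e \<le> norm (f t + g t)}" if e: "e > 0" for e :: real
  proof (rule finite_subset)
    show "{t\<in>P. e \<le> norm (f t + g t)} \<subseteq> {t\<in>P. e/2 \<le> norm (f t)} \<union> {t\<in>P. e/2 \<le> norm (g t)}"
    proof
      fix t assume "t \<in> {t\<in>P. e \<le> norm (f t + g t)}"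
      with norm_triangle_ineq[of "f t" "g t"]
      show "t \<in> {t\<in>P. e/2 \<le> norm (f t)} \<union> {t\<in>P. e/2 \<le> norm (g t)}" by auto
    qed
    show "finite ({t\<in>P. e/2 \<le> norm (f t)} \<union> {t\<in>P. e/2 \<le> norm (g t)})"
      using c0_finite_level[OF f half_gt_zero[OF e]] c0_finite_level[OF g half_gt_zero[OF e]] by simp
  qed
  then show ?thesis using f g unfolding c0_def by auto
qed

lemma c0_mult_bounded:
  assumes a: "\<forall>t. norm (a t) \<le> B" and x: "x \<in> c0 P"
  shows "(\<lambda>t. a t * x t) \<in> c0 P"
proof -
  define B' where "B' = max B 1"
  have B': "B' > 0" "\<forall>t. norm (a t) \<le> B'"
    using a unfolding B'_def by (auto intro: le_max_iff_disj[THEN iffD2])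
  have "finite {t\<in>P. e \<le> norm (a t * x t)}" if e: "e > 0" for e :: real
  proof (rule finite_subset)
    show "finite {t\<in>P. e / B' \<le> norm (x t)}"
      using c0_finite_level[OF x] e B' by simp
    have "e \<le> norm (a t * x t) \<Longrightarrow> e / B' \<le> norm (x t)" for t
      using B' mult_right_mono[of "norm (a t)" B' "norm (x t)"]
      by (simp add: norm_mult divide_le_eq mult.commute)
    then show "{t\<in>P. e \<le> norm (a t * x t)} \<subseteq> {t\<in>P. e / B' \<le> norm (x t)}"
      by blast
  qed
  then show ?thesis using x unfolding c0_def by auto
qed

lemma c0_scale: "f \<in> c0 P \<Longrightarrow> (\<lambda>t. c * f t) \<in> c0 P"
  using c0_mult_bounded[of "\<lambda>_. c" "norm c" f P] by simp

lemma c0_uniform_limit: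
  assumes a0: "\<And>t. t \<notin> P \<Longrightarrow> a t = 0"
    and approx: "\<And>e. e > 0 \<Longrightarrow> \<exists>x\<in>c0 P. \<forall>t\<in>P. norm (a t - x t) < e"
  shows "a \<in> c0 P"
proof -
  have "finite {t\<in>P. e \<le> norm (a t)}" if e: "e > 0" for e :: real
  proof -
    obtain x where x: "x \<in> c0 P" "\<forall>t\<in>P. norm (a t - x t) < e/2"
      using approx[of "e/2"] e by auto
    show ?thesis
    proof (rule finite_subset)
      show "finite {t\<in>P. e/2 \<le> norm (x t)}" using c0_finite_level[OF x(1) half_gt_zero[OF e]] .
      show "{t\<in>P. e \<le> norm (a t)} \<subseteq> {t\<in>P. e/2 \<le> norm (x t)}"
      proof
        fix t assume "t \<in> {t\<in>P. e \<le> norm (a t)}"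
        with x(2) norm_triangle_sub[of "a t" "x t"]
        show "t \<in> {t\<in>P. e/2 \<le> norm (x t)}" by force
      qed
    qed
  qed
  then show ?thesis using a0 unfolding c0_def by auto
qed

lemma indicator_singleton_in_c0:
  assumes "s \<in> P"
  shows "(indicator {s} :: 'a \<Rightarrow> complex) \<in> c0 P"
proof -
  have "{t\<in>P. e \<le> norm (indicator {s} t :: complex)} \<subseteq> {s}" if "e > 0" for e :: real
    using that by (auto simp: indicator_def split: if_splits)
  then show ?thesis using assms unfolding c0_def by (auto simp: indicator_def intro: finite_subset)
qed

lemma BP_subset_linf: "BP P \<subseteq> linf P"
  unfolding BP_def by blast

subsection \<open>FESSPE and c_0(P) \<subseteq> B_P\<close>

lemma FESSPE_imp_c0_subset_BP:
  assumes q: "qlo P" and fe: "has_FESSPE P"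
  shows "c0 P \<subseteq> BP P"
proof
  fix f assume f: "f \<in> c0 P"
  have "\<exists>g\<in>span_ind P. sup_dist P f g < e" if e: "e > 0" for e :: real
  proof
    define K where "K = {t\<in>P. e/2 \<le> norm (f t)}"
    define g where "g = (\<lambda>t. if t \<in> K then f t else 0)"
    show "g \<in> span_ind P"
      using c0_finite_level[OF f half_gt_zero[OF e]]
      by (intro finite_support_in_span_ind[OF q fe, of K]) (auto simp: K_def g_def)
    have "sup_dist P f g \<le> e/2"
      unfolding sup_dist_def using qlo_zero[OF q] e by (intro cSUP_least) (auto simp: g_def K_def)
    then show "sup_dist P f g < e" using e by simp
  qed
  then show "f \<in> BP P" using f c0_subset_linf unfolding BP_def by blast
qed

lemma span_ind_value_eq_at_zero:
  assumes q: "qlo P" and S: "S \<subseteq> P" and t: "t \<in> P"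
    and below: "\<forall>s\<in>S - {0}. \<not> pleq P s t"
  shows "(\<Sum>s\<in>S. c s * ind P s t) = (\<Sum>s\<in>S. c s * ind P s 0)"
proof (rule sum.cong)
  fix s assume s: "s \<in> S"
  have "\<not> pleq P s 0" if "s \<noteq> 0"
    using that s S pleq_zero_imp_zero[OF q] by blast
  then show "c s * ind P s t = c s * ind P s 0"
    using s t below qlo_zero[OF q] by (cases "s = 0") (auto simp: ind_def pleq_def)
qed simp

lemma FESSPE_of_cover:
  assumes q: "qlo P" and F: "finite F" "F \<subseteq> P - {0}"
    and cover: "\<forall>t\<in>P - {0}. \<exists>f\<in>F. pleq P f t"
  shows "has_FESSPE P"
proof -
  have "{f + p | f p. f \<in> F \<and> p \<in> P} = P - {0}"
  proof (intro set_eqI iffI)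
    fix t assume "t \<in> {f + p | f p. f \<in> F \<and> p \<in> P}"
    then obtain f p where t: "t = f + p" and f: "f \<in> F" and p: "p \<in> P" by blast
    have "t \<noteq> 0"
    proof
      assume "t = 0"
      then have "- f = p" using t by (simp add: minus_unique)
      then show False using f p F qlo_antisym[OF q, of f] by blast
    qed
    moreover have "t \<in> P" using t f p F qlo_add[OF q] by blast
    ultimately show "t \<in> P - {0}" by blast
  next
    fix t assume "t \<in> P - {0}"
    then obtain f where f: "f \<in> F" and "pleq P f t" using cover by blast
    from \<open>pleq P f t\<close> have "- f + t \<in> P" unfolding pleq_def .
    moreover have "t = f + (- f + t)" by (simp add: add.assoc[symmetric])
    ultimately show "t \<in> {f + p | f p. f \<in> F \<and> p \<in> P}" using f by blast
  qed
  then show ?thesis using F unfolding has_FESSPE_def by blast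
qed

lemma c0_subset_BP_imp_FESSPE:
  assumes q: "qlo P" and c: "c0 P \<subseteq> BP P"
  shows "has_FESSPE P"
proof -
  have z: "0 \<in> P" using qlo_zero[OF q] .
  have \<delta>: "indicator {0} \<in> BP P" using c indicator_singleton_in_c0[OF z] by blast
  then have "\<forall>e>0. \<exists>g\<in>span_ind P. sup_dist P (indicator {0}) g < e"
    unfolding BP_def by blast
  then obtain g where "g \<in> span_ind P" and near: "sup_dist P (indicator {0}) g < 1/2"
    by (meson half_gt_zero zero_less_one)
  then obtain S c where S: "finite S" "S \<subseteq> P" and g: "g = (\<lambda>t. \<Sum>s\<in>S. c s * ind P s t)"
    unfolding span_ind_def by blast
  have near_at: "norm (indicator {0} t - g t) < 1/2" if "t \<in> P" for t
  proof -
    have "indicator {0} \<in> linf P" "g \<in> linf P"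
      using \<delta> \<open>g \<in> span_ind P\<close> BP_subset_linf span_ind_subset_linf by blast+
    then show ?thesis using norm_le_sup_dist[OF _ _ that] near by fastforce
  qed
  have "\<exists>f\<in>S - {0}. pleq P f t" if t: "t \<in> P - {0}" for t
  proof (rule ccontr)
    assume "\<not> ?thesis"
    then have "g t = g 0"
      unfolding g using span_ind_value_eq_at_zero[OF q S(2)] t by blast
    moreover have "norm (1 - g 0) < 1/2" "norm (g t) < 1/2"
      using near_at[OF z] near_at[of t] t by auto
    ultimately show False
      using norm_triangle_sub[of "1::complex" "g 0"] by simp
  qed
  then show ?thesis using FESSPE_of_cover[OF q, of "S - {0}"] S by auto
qed

subsection \<open>Essential ideals\<close>

lemma is_closed_idealD:
  assumes "is_closed_ideal pl mu sc z d A I"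
  shows "I \<subseteq> A" and "z \<in> I"
    and "x \<in> I \<Longrightarrow> y \<in> I \<Longrightarrow> pl x y \<in> I"
    and "x \<in> I \<Longrightarrow> sc c x \<in> I"
    and "a \<in> A \<Longrightarrow> x \<in> I \<Longrightarrow> mu a x \<in> I"
    and "a \<in> A \<Longrightarrow> x \<in> I \<Longrightarrow> mu x a \<in> I"
    and "a \<in> A \<Longrightarrow> (\<And>e. e > 0 \<Longrightarrow> \<exists>x\<in>I. d a x < e) \<Longrightarrow> a \<in> I"
  using assms unfolding is_closed_ideal_def by blast+

lemma is_essential_idealI:
  assumes I: "is_closed_ideal pl mu sc z d A I"
    and nondegenerate: "\<And>a. a \<in> A \<Longrightarrow> a \<noteq> z \<Longrightarrow> \<exists>x\<in>I. mu x a \<noteq> z"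
  shows "is_essential_ideal pl mu sc z d A I"
  unfolding is_essential_ideal_def
proof (intro conjI allI impI I)
  fix J assume "is_closed_ideal pl mu sc z d A J \<and> J \<noteq> {z}"
  then have J: "is_closed_ideal pl mu sc z d A J" and "J \<noteq> {z}" by blast+
  then obtain a where a: "a \<in> J" "a \<noteq> z" using is_closed_idealD(2)[OF J] by blast
  then have "a \<in> A" using is_closed_idealD(1)[OF J] by blast
  then obtain x where x: "x \<in> I" "mu x a \<noteq> z" using nondegenerate a(2) by blast
  then have "mu x a \<in> I" "mu x a \<in> J"
    using is_closed_idealD(6)[OF I \<open>a \<in> A\<close>] is_closed_idealD(5)[OF J _ a(1)]
      is_closed_idealD(1)[OF I] by blast+
  then show "I \<inter> J \<noteq> {z}" using x(2) by blast
qed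

lemma is_closed_ideal_image:
  assumes I: "is_closed_ideal pl mu sc z d A I"
    and hom: "\<And>a b. \<phi> (pl a b) = pl' (\<phi> a) (\<phi> b) \<and> \<phi> (mu a b) = mu' (\<phi> a) (\<phi> b)"
    and hom_scale: "\<And>c a. \<phi> (sc c a) = sc' c (\<phi> a)"
    and hom_zero: "\<phi> z = z'"
    and dist: "\<And>a b. a \<in> A \<Longrightarrow> b \<in> A \<Longrightarrow> d a b \<le> d' (\<phi> a) (\<phi> b)"
  shows "is_closed_ideal pl' mu' sc' z' d' (\<phi> ` A) (\<phi> ` I)"
proof -
  note IA = is_closed_idealD(1)[OF I]
  have closed: "\<phi> a \<in> \<phi> ` I" if a: "a \<in> A" and approx: "\<forall>e>0. \<exists>y\<in>\<phi> ` I. d' (\<phi> a) y < e" for a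
  proof -
    have "\<exists>x\<in>I. d a x < e" if e: "e > 0" for e
    proof -
      obtain x where "x \<in> I" "d' (\<phi> a) (\<phi> x) < e" using approx e by blast
      moreover have "d a x \<le> d' (\<phi> a) (\<phi> x)" using dist a IA \<open>x \<in> I\<close> by blast
      ultimately show ?thesis by force
    qed
    then show ?thesis using is_closed_idealD(7)[OF I a] by blast
  qed
  show ?thesis
    unfolding is_closed_ideal_def
  proof (intro conjI ballI allI impI)
    show "\<phi> ` I \<subseteq> \<phi> ` A" using IA by blast
    show "z' \<in> \<phi> ` I" using is_closed_idealD(2)[OF I] hom_zero by blast
  next
    fix x y assume "x \<in> \<phi> ` I" "y \<in> \<phi> ` I"
    then obtain x0 y0 where "x0 \<in> I" "y0 \<in> I" "x = \<phi> x0" "y = \<phi> y0" by blast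
    then show "pl' x y \<in> \<phi> ` I"
      using is_closed_idealD(3)[OF I, of x0 y0] hom[of x0 y0] by (metis rev_image_eqI)
  next
    fix c x assume "x \<in> \<phi> ` I"
    then obtain x0 where "x0 \<in> I" "x = \<phi> x0" by blast
    then show "sc' c x \<in> \<phi> ` I"
      using is_closed_idealD(4)[OF I, of x0 c] hom_scale[of c x0] by (metis rev_image_eqI)
  next
    fix a x assume "a \<in> \<phi> ` A" "x \<in> \<phi> ` I"
    then obtain a0 x0 where "a0 \<in> A" "x0 \<in> I" "a = \<phi> a0" "x = \<phi> x0" by blast
    then show "mu' a x \<in> \<phi> ` I" "mu' x a \<in> \<phi> ` I"
      using is_closed_idealD(5,6)[OF I, of a0 x0] hom[of a0 x0] hom[of x0 a0]
      by (metis rev_image_eqI)+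
  next
    fix a assume "a \<in> \<phi> ` A" "\<forall>e>0. \<exists>x\<in>\<phi> ` I. d' a x < e"
    then show "a \<in> \<phi> ` I" using closed by blast
  qed
qed

lemma c0_closed_ideal_BP:
  assumes c: "c0 P \<subseteq> BP P"
  shows "is_closed_ideal (\<lambda>f g t. f t + g t) (\<lambda>f g t. f t * g t) (\<lambda>c f t. c * f t) (\<lambda>t. 0)
     (sup_dist P) (BP P) (c0 P)"
  unfolding is_closed_ideal_def
proof (intro conjI ballI allI impI c c0_zero c0_add c0_scale)
  fix a x assume a: "a \<in> BP P" and x: "x \<in> c0 P"
  then obtain B where "\<forall>t. norm (a t) \<le> B" using BP_subset_linf linf_bound by blast
  then show "(\<lambda>t. a t * x t) \<in> c0 P" "(\<lambda>t. x t * a t) \<in> c0 P"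
    using c0_mult_bounded[OF _ x] by (auto simp: mult.commute)
next
  fix a assume a: "a \<in> BP P" and approx: "\<forall>e>0. \<exists>x\<in>c0 P. sup_dist P a x < e"
  have "\<exists>x\<in>c0 P. \<forall>t\<in>P. norm (a t - x t) < e" if e: "e > 0" for e
  proof -
    obtain x where x: "x \<in> c0 P" "sup_dist P a x < e" using approx e by blast
    have "a \<in> linf P" "x \<in> linf P" using a x(1) BP_subset_linf c0_subset_linf by blast+
    then have "norm (a t - x t) < e" if "t \<in> P" for t
      using norm_le_sup_dist[OF _ _ that] x(2) by (meson order.strict_trans1)
    then show ?thesis using x(1) by blast
  qed
  moreover have "a t = 0" if "t \<notin> P" for t
    using a that BP_subset_linf unfolding linf_def by blast
  ultimately show "a \<in> c0 P" using c0_uniform_limit by blast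
qed

lemma BP_nonzero_point:
  assumes "f \<in> BP P" "f \<noteq> (\<lambda>t. 0)"
  obtains t where "t \<in> P" "f t \<noteq> 0"
proof -
  obtain t where "f t \<noteq> 0" using assms(2) by (meson ext)
  moreover have "t \<in> P" using calculation assms(1) BP_subset_linf unfolding linf_def by blast
  ultimately show ?thesis using that by blast
qed

lemma indicator_mult_nonzero:
  "f t \<noteq> 0 \<Longrightarrow> (\<lambda>s. indicator {t} s * f s) \<noteq> (\<lambda>s. 0 :: complex)"
  by (auto simp: fun_eq_iff intro!: exI[of _ t])

lemma c0_essential_ideal_BP:
  assumes c: "c0 P \<subseteq> BP P"
  shows "fun_essential_ideal P (BP P) (c0 P)"
  unfolding fun_essential_ideal_def
proof (rule is_essential_idealI[OF c0_closed_ideal_BP[OF c]])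
  fix f assume "f \<in> BP P" "f \<noteq> (\<lambda>t. 0)"
  then obtain t where "t \<in> P" "f t \<noteq> 0" by (rule BP_nonzero_point)
  then show "\<exists>x\<in>c0 P. (\<lambda>t. x t * f t) \<noteq> (\<lambda>t. 0)"
    by (intro bexI[of _ "indicator {t}"] indicator_mult_nonzero indicator_singleton_in_c0)
qed

subsection \<open>Multiplication operators\<close>

lemma mult_op_add: "mult_op (\<lambda>t. f t + g t) = (\<lambda>x t. mult_op f x t + mult_op g x t)"
  by (simp add: mult_op_def fun_eq_iff distrib_right)

lemma mult_op_mult: "mult_op (\<lambda>t. f t * g t) = mult_op f \<circ> mult_op g"
  by (simp add: mult_op_def fun_eq_iff mult.assoc)

lemma mult_op_scale: "mult_op (\<lambda>t. c * f t) = (\<lambda>x t. c * mult_op f x t)"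
  by (simp add: mult_op_def fun_eq_iff mult.assoc)

lemma mult_op_zero: "mult_op (\<lambda>t. 0) = (\<lambda>x t. 0)"
  by (simp add: mult_op_def)

lemma inj_mult_op: "inj mult_op"
proof
  fix f g :: "'a \<Rightarrow> complex" assume "mult_op f = mult_op g"
  then have "mult_op f (\<lambda>_. 1) = mult_op g (\<lambda>_. 1)" by simp
  then show "f = g" by (simp add: mult_op_def)
qed

lemma
  fixes h :: "'a \<Rightarrow> real"
  assumes "t0 \<in> P" "\<And>t. t \<noteq> t0 \<Longrightarrow> h t = 0"
  shows summable_on_single_support: "h summable_on P"
    and infsum_single_support: "infsum h P = h t0"
proof -
  have "h summable_on P \<longleftrightarrow> h summable_on {t0}"
    by (rule summable_on_cong_neutral) (use assms in auto)
  then show "h summable_on P" by simp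
  have "infsum h P = infsum h {t0}"
    by (rule infsum_cong_neutral) (use assms in auto)
  then show "infsum h P = h t0" by simp
qed

lemma indicator_singleton_in_l2:
  assumes "t0 \<in> P"
  shows "indicator {t0} \<in> l2 P" "l2norm P (indicator {t0}) = 1"
    and "l2norm P (mult_op h (indicator {t0})) = norm (h t0)"
  using assms summable_on_single_support[OF assms, of "\<lambda>t. (norm (indicator {t0} t :: complex))\<^sup>2"]
    infsum_single_support[OF assms, of "\<lambda>t. (norm (indicator {t0} t :: complex))\<^sup>2"]
    infsum_single_support[OF assms, of "\<lambda>t. (norm (mult_op h (indicator {t0}) t))\<^sup>2"]
  by (auto simp: l2_def l2norm_def mult_op_def indicator_def)

lemma l2norm_mult_op_le:
  assumes B: "\<And>t. t \<in> P \<Longrightarrow> norm (h t) \<le> B" and "0 \<le> B"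
    and x: "x \<in> l2 P" "l2norm P x \<le> 1"
  shows "l2norm P (mult_op h x) \<le> B"
proof -
  have xs: "(\<lambda>t. (norm (x t))\<^sup>2) summable_on P" and xi: "infsum (\<lambda>t. (norm (x t))\<^sup>2) P \<le> 1"
    using x unfolding l2_def l2norm_def by auto
  have pt: "(norm (mult_op h x t))\<^sup>2 \<le> B\<^sup>2 * (norm (x t))\<^sup>2" if "t \<in> P" for t
    unfolding mult_op_def norm_mult power_mult_distrib
    using B[OF that] by (intro mult_right_mono power_mono) auto
  have bs: "(\<lambda>t. B\<^sup>2 * (norm (x t))\<^sup>2) summable_on P"
    using xs by (rule summable_on_cmult_right)
  have "infsum (\<lambda>t. (norm (mult_op h x t))\<^sup>2) P \<le> infsum (\<lambda>t. B\<^sup>2 * (norm (x t))\<^sup>2) P"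
    using pt by (intro infsum_mono summable_on_comparison_test[OF bs]) auto
  also have "\<dots> = B\<^sup>2 * infsum (\<lambda>t. (norm (x t))\<^sup>2) P"
    using xs by (rule infsum_cmult_right)
  also have "\<dots> \<le> B\<^sup>2"
    using mult_left_mono[OF xi, of "B\<^sup>2"] by simp
  finally have "sqrt (infsum (\<lambda>t. (norm (mult_op h x t))\<^sup>2) P) \<le> sqrt (B\<^sup>2)"
    by (rule real_sqrt_le_mono)
  then show ?thesis
    unfolding l2norm_def using \<open>0 \<le> B\<close> by simp
qed

lemma norm_le_op_dist_mult_op:
  assumes "f \<in> linf P" "g \<in> linf P" "t0 \<in> P"
  shows "norm (f t0 - g t0) \<le> op_dist P (mult_op f) (mult_op g)"
proof -
  have diff: "(\<lambda>t. mult_op f x t - mult_op g x t) = mult_op (\<lambda>t. f t - g t) x" for x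
    by (simp add: mult_op_def fun_eq_iff left_diff_distrib)
  obtain Bf Bg where "\<forall>t. norm (f t) \<le> Bf" "\<forall>t. norm (g t) \<le> Bg"
    using linf_bound assms(1,2) by metis
  then have B: "norm (f t - g t) \<le> Bf + Bg" "0 \<le> Bf + Bg" for t
    by (meson add_mono norm_triangle_ineq4 order.trans norm_ge_zero)+
  have "norm (f t0 - g t0) = l2norm P (mult_op (\<lambda>t. f t - g t) (indicator {t0}))"
    using indicator_singleton_in_l2(3)[OF assms(3)] by simp
  then have "norm (f t0 - g t0) \<in> {l2norm P (mult_op (\<lambda>t. f t - g t) x) | x. x \<in> l2 P \<and> l2norm P x \<le> 1}"
    using indicator_singleton_in_l2(1,2)[OF assms(3)] by force
  moreover have "bdd_above {l2norm P (mult_op (\<lambda>t. f t - g t) x) | x. x \<in> l2 P \<and> l2norm P x \<le> 1}"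
    using l2norm_mult_op_le[OF B] by (auto intro!: bdd_aboveI)
  ultimately show ?thesis
    unfolding op_dist_def diff by (rule cSup_upper)
qed

lemma sup_dist_le_op_dist:
  assumes "f \<in> linf P" "g \<in> linf P" "P \<noteq> {}"
  shows "sup_dist P f g \<le> op_dist P (mult_op f) (mult_op g)"
  unfolding sup_dist_def
proof (rule cSUP_least)
  show "P \<noteq> {}" by (rule assms(3))
  show "norm (f t - g t) \<le> op_dist P (mult_op f) (mult_op g)" if "t \<in> P" for t
    using assms(1,2) that by (rule norm_le_op_dist_mult_op)
qed

lemma c0_iota_essential_ideal_Diag:
  assumes q: "qlo P" and c: "c0 P \<subseteq> BP P"
  shows "op_essential_ideal P (Diag P) (c0_iota P)"
  unfolding op_essential_ideal_def Diag_def c0_iota_def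
proof (rule is_essential_idealI)
  show "is_closed_ideal (\<lambda>S T x t. S x t + T x t) (\<lambda>S T. S \<circ> T) (\<lambda>c S x t. c * S x t)
      (\<lambda>x t. 0) (op_dist P) (mult_op ` BP P) (mult_op ` c0 P)"
  proof (rule is_closed_ideal_image[OF c0_closed_ideal_BP[OF c]])
    show "mult_op (\<lambda>t. a t + b t) = (\<lambda>x t. mult_op a x t + mult_op b x t) \<and>
        mult_op (\<lambda>t. a t * b t) = mult_op a \<circ> mult_op b" for a b :: "'a \<Rightarrow> complex"
      by (simp only: mult_op_add mult_op_mult)
    show "mult_op (\<lambda>t. c * a t) = (\<lambda>x t. c * mult_op a x t)" for c and a :: "'a \<Rightarrow> complex"
      by (rule mult_op_scale)
    show "mult_op (\<lambda>t. 0) = (\<lambda>x t. 0)" by (rule mult_op_zero)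
    show "sup_dist P a b \<le> op_dist P (mult_op a) (mult_op b)" if "a \<in> BP P" "b \<in> BP P" for a b
      using that BP_subset_linf qlo_zero[OF q] by (intro sup_dist_le_op_dist) blast+
  qed
next
  fix A assume "A \<in> mult_op ` BP P" "A \<noteq> (\<lambda>x t. 0)"
  then obtain f where f: "f \<in> BP P" "A = mult_op f" "f \<noteq> (\<lambda>t. 0)"
    using mult_op_zero by blast
  then obtain t where "t \<in> P" "f t \<noteq> 0" by (metis BP_nonzero_point)
  then have "mult_op (\<lambda>s. indicator {t} s * f s) \<noteq> mult_op (\<lambda>s. 0)"
    using indicator_mult_nonzero[of f t] inj_mult_op[THEN injD] by metis
  then have "mult_op (indicator {t}) \<circ> A \<noteq> (\<lambda>x t. 0)"
    by (simp add: f(2) mult_op_mult mult_op_zero)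
  then show "\<exists>X\<in>mult_op ` c0 P. X \<circ> A \<noteq> (\<lambda>x t. 0)"
    using indicator_singleton_in_c0[OF \<open>t \<in> P\<close>] by blast
qed

theorem lemma6p4:
  fixes P :: "'g::group_add set"
  assumes "qlo P"
  shows "(has_FESSPE P \<longleftrightarrow> c0 P \<subseteq> BP P)
       \<and> (c0 P \<subseteq> BP P \<longleftrightarrow> fun_essential_ideal P (BP P) (c0 P))
       \<and> (fun_essential_ideal P (BP P) (c0 P) \<longleftrightarrow> op_essential_ideal P (Diag P) (c0_iota P))"
proof -
  have FESSPE_iff: "has_FESSPE P \<longleftrightarrow> c0 P \<subseteq> BP P"
    using FESSPE_imp_c0_subset_BP[OF assms] c0_subset_BP_imp_FESSPE[OF assms] by blast
  have fun_iff: "c0 P \<subseteq> BP P \<longleftrightarrow> fun_essential_ideal P (BP P) (c0 P)"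
  proof
    assume "fun_essential_ideal P (BP P) (c0 P)"
    then show "c0 P \<subseteq> BP P"
      unfolding fun_essential_ideal_def is_essential_ideal_def by (blast dest: is_closed_idealD(1))
  qed (rule c0_essential_ideal_BP)
  have op_iff: "c0 P \<subseteq> BP P \<longleftrightarrow> op_essential_ideal P (Diag P) (c0_iota P)"
  proof
    assume "op_essential_ideal P (Diag P) (c0_iota P)"
    then have "mult_op ` c0 P \<subseteq> mult_op ` BP P"
      unfolding op_essential_ideal_def is_essential_ideal_def Diag_def c0_iota_def
      by (blast dest: is_closed_idealD(1))
    then show "c0 P \<subseteq> BP P" by (simp add: inj_image_subset_iff[OF inj_mult_op])
  qed (rule c0_iota_essential_ideal_Diag[OF assms])
  show ?thesis using FESSPE_iff fun_iff op_iff by simp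
qed

end
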